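(* For every integer $q\ge 5$ there exists an $\mathcal{SOS}_q(2)$ of period $\frac{q(q-4)}{4}$ if $q\equiv 0\pmod 4$, $\frac{(q+1)(q-1)}{4}$ if $q\equiv 1\pmod 4$, $\frac{q(q-2)}{4}$ if $q\equiv 2\pmod 4$, and $\frac{(q+1)(q-3)}{4}$ if $q\equiv 3\pmod 4$.
   Context: For a periodic sequence $S=(s_i)$ over $\mathbb{Z}_q$ write $\mathbf{s}_n(i)=(s_i,\ldots,s_{i+n-1})$; $\mathbf{u}^R$ denotes the reverse of a tuple and $-\mathbf{u}$ its termwise negative. An $\mathcal{SOS}_q(n)$ is a periodic sequence of period $m$ over $\mathbb{Z}_q$ such that $\mathbf{s}_n(i)=\mathbf{s}_n(j)$ implies $i\equiv j\pmod m$, and $\mathbf{s}_n(i)\neq\mathbf{s}_n(j)^R$ and $\mathbf{s}_n(i)\neq-\mathbf{s}_n(j)^R$ for all $i,j$. *)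

theory Defs
  imports Main
begin

definition window :: "(nat \<Rightarrow> int) \<Rightarrow> nat \<Rightarrow> nat \<Rightarrow> int list" where
  "window s n i = map (\<lambda>k. s (i + k)) [0..<n]"

definition neg_mod :: "int \<Rightarrow> int list \<Rightarrow> int list" where
  "neg_mod q u = map (\<lambda>x. (- x) mod q) u"

definition is_SOS :: "int \<Rightarrow> nat \<Rightarrow> nat \<Rightarrow> (nat \<Rightarrow> int) \<Rightarrow> bool" where
  "is_SOS q n m s \<longleftrightarrow>
     0 < m \<and>
     (\<forall>i. s i \<in> {0..<q}) \<and>
     (\<forall>i. s (i + m) = s i) \<and>
     (\<forall>i j. window s n i = window s n j \<longrightarrow> i mod m = j mod m) \<and>
     (\<forall>i j. window s n i \<noteq> rev (window s n j)) \<and>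
     (\<forall>i j. window s n i \<noteq> rev (neg_mod q (window s n j)))"

end

theory Submission
  imports Defs
begin

text \<open>
  For \<open>n = 2\<close> the SOS conditions hold as soon as the consecutive pairs of one period are
  distinct and all of them are arcs of an oriented graph on \<open>\<int>\<^sub>q\<close> that is invariant
  under negation: a pair occurring reversed, or negated and reversed, would then give an arc
  in both directions. Such sequences are obtained as a walk \<open>w\<close> of length \<open>M\<close> followed by
  \<open>-w\<close>, provided the pairs of \<open>w\<close> are distinct even up to the sign of each entry.
  For \<open>q \<ge> 4D + 1\<close> the walk is an Eulerian circuit of the circulant tournament on the classes
  \<open>{0, \<dots>, 2D}\<close> (arcs \<open>a \<rightarrow> a + k\<close>, \<open>1 \<le> k \<le> D\<close>), of length \<open>D(2D + 1)\<close>; for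
  \<open>q \<ge> 4D + 3\<close> a path \<open>1, 0, D - 1, D - 2, \<dots>, 2\<close> with alternating signs is put in front of
  such a circuit on the classes \<open>{1, \<dots>, 2D + 1}\<close>, giving length \<open>D(2D + 2)\<close>.
  The cases \<open>q = 7, 8, 11, 12\<close> are covered by explicit sequences.
\<close>

section \<open>Residues up to sign\<close>

definition mod_abs :: "int \<Rightarrow> int \<Rightarrow> int" where
  "mod_abs q x = min (x mod q) ((- x) mod q)"

definition neg_if :: "int \<Rightarrow> bool \<Rightarrow> int \<Rightarrow> int" where
  "neg_if q b x = (if b then (- x) mod q else x)"

definition lower_half :: "int \<Rightarrow> int \<Rightarrow> bool" where
  "lower_half q x \<longleftrightarrow> 2 * (x mod q) < q"

lemma mod_abs_neg [simp]: "mod_abs q ((- x) mod q) = mod_abs q x"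
  by (simp add: mod_abs_def mod_minus_eq min.commute)

lemma mod_abs_neg_if [simp]: "mod_abs q (neg_if q b x) = mod_abs q x"
  by (simp add: neg_if_def)

lemma mod_abs_eq_self: "0 \<le> x \<Longrightarrow> 2 * x < q \<Longrightarrow> mod_abs q x = x"
  by (auto simp: mod_abs_def zmod_zminus1_eq_if min_def)

lemma neg_if_range: "0 < q \<Longrightarrow> x \<in> {0..<q} \<Longrightarrow> neg_if q b x \<in> {0..<q}"
  by (simp add: neg_if_def)

lemma neg_if_not:
  assumes "x \<in> {0..<q}"
  shows "neg_if q (\<not> b) x = (- neg_if q b x) mod q"
  using assms mod_minus_eq[of "-x" q] by (auto simp: neg_if_def)

lemma lower_half_neg:
  assumes "0 < mod_abs q x" "2 * mod_abs q x < q"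
  shows "lower_half q ((- x) mod q) \<longleftrightarrow> \<not> lower_half q x"
proof -
  have "x mod q \<noteq> 0" using assms by (auto simp: mod_abs_def)
  then have neg: "(- x) mod q = q - x mod q" by (simp add: zmod_zminus1_eq_if)
  then have "2 * (x mod q) \<noteq> q" using assms by (auto simp: mod_abs_def)
  with neg show ?thesis unfolding lower_half_def mod_mod_trivial unfolding neg by (smt (verit))
qed

lemma lower_half_neg_if:
  assumes "0 < x" "2 * x < q"
  shows "lower_half q (neg_if q b x) \<longleftrightarrow> \<not> b"
  using assms lower_half_neg[of q x] by (auto simp: neg_if_def mod_abs_eq_self lower_half_def)

lemma self_negating_eq_0:
  assumes "x \<in> {0..<q}" "(- x) mod q = x" "2 * mod_abs q x < q"
  shows "x = 0"
  using assms by (auto simp: mod_abs_def zmod_zminus1_eq_if split: if_splits)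

section \<open>A pair criterion for SOS sequences of order 2\<close>

lemma window_2: "window s 2 i = [s i, s (Suc i)]"
  by (simp add: window_def numeral_2_eq_2)

lemma is_SOS_2_if_oriented:
  fixes s :: "nat \<Rightarrow> int" and P :: "int \<Rightarrow> int \<Rightarrow> bool"
  assumes "0 < m" and range: "\<And>i. s i \<in> {0..<q}" and periodic: "\<And>i. s (i + m) = s i"
    and pair_inj: "\<And>i j. s i = s j \<Longrightarrow> s (Suc i) = s (Suc j) \<Longrightarrow> i mod m = j mod m"
    and steps: "\<And>i. P (s i) (s (Suc i))"
    and asym: "\<And>x y. P x y \<Longrightarrow> \<not> P y x"
    and neg_asym: "\<And>x y. P x y \<Longrightarrow> \<not> P ((- y) mod q) ((- x) mod q)"
  shows "is_SOS q 2 m s"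
  unfolding is_SOS_def window_2
proof (intro conjI allI impI)
  show "[s i, s (Suc i)] \<noteq> rev [s j, s (Suc j)]" for i j
  proof
    assume "[s i, s (Suc i)] = rev [s j, s (Suc j)]"
    then show False using steps[of i] asym[OF steps[of j]] by simp
  qed
  show "[s i, s (Suc i)] \<noteq> rev (neg_mod q [s j, s (Suc j)])" for i j
  proof
    assume "[s i, s (Suc i)] = rev (neg_mod q [s j, s (Suc j)])"
    then show False using steps[of i] neg_asym[OF steps[of j]] by (simp add: neg_mod_def)
  qed
  show "i mod m = j mod m" if "[s i, s (Suc i)] = [s j, s (Suc j)]" for i j
    using that by (intro pair_inj) simp_all
qed (use \<open>0 < m\<close> range periodic in simp_all)

definition cyclic_pairs :: "'a list \<Rightarrow> ('a \<times> 'a) list" where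
  "cyclic_pairs xs = map (\<lambda>k. (xs ! k, xs ! (Suc k mod length xs))) [0..<length xs]"

lemma is_SOS_2_cyclic_list:
  fixes xs :: "int list"
  assumes "length xs = m" "0 < m" "\<forall>x\<in>set xs. 0 \<le> x \<and> x < q"
    and "distinct (cyclic_pairs xs)"
    and "\<forall>(x, y) \<in> set (cyclic_pairs xs).
           (y, x) \<notin> set (cyclic_pairs xs) \<and> ((- y) mod q, (- x) mod q) \<notin> set (cyclic_pairs xs)"
  shows "is_SOS q 2 m (\<lambda>i. xs ! (i mod m))"
proof (rule is_SOS_2_if_oriented[where P = "\<lambda>x y. (x, y) \<in> set (cyclic_pairs xs)"])
  have pair: "(xs ! (i mod m), xs ! (Suc i mod m)) = cyclic_pairs xs ! (i mod m)" for i
    using assms(1,2) by (simp add: cyclic_pairs_def mod_Suc_eq)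
  have len: "length (cyclic_pairs xs) = m"
    using assms(1) by (simp add: cyclic_pairs_def)
  show "(xs ! (i mod m), xs ! (Suc i mod m)) \<in> set (cyclic_pairs xs)" for i
    unfolding pair using len assms(2) by simp
  show "i mod m = j mod m"
    if "xs ! (i mod m) = xs ! (j mod m)" "xs ! (Suc i mod m) = xs ! (Suc j mod m)" for i j
  proof -
    have "cyclic_pairs xs ! (i mod m) = cyclic_pairs xs ! (j mod m)"
      using that pair[of i] pair[of j] by simp
    then show ?thesis using nth_eq_iff_index_eq[OF assms(4)] len assms(2) by simp
  qed
  show "xs ! (i mod m) \<in> {0..<q}" for i
    using assms(1-3) by simp
  show "(y, x) \<notin> set (cyclic_pairs xs)" "((- y) mod q, (- x) mod q) \<notin> set (cyclic_pairs xs)"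
    if "(x, y) \<in> set (cyclic_pairs xs)" for x y
    using assms(5) that by auto
qed (simp_all add: assms(2))

lemma is_SOS_7: "is_SOS 7 2 8 (\<lambda>i. [0, 1, 2, 0, 3, 1, 4, 5] ! (i mod 8))"
  by (rule is_SOS_2_cyclic_list) code_simp+

lemma is_SOS_8: "is_SOS 8 2 8 (\<lambda>i. [0, 1, 2, 0, 3, 1, 4, 6] ! (i mod 8))"
  by (rule is_SOS_2_cyclic_list) code_simp+

lemma is_SOS_11: "is_SOS 11 2 24
  (\<lambda>i. [0, 1, 2, 0, 3, 1, 4, 0, 5, 1, 6, 2, 3, 4, 2, 5, 3, 6, 4, 5, 7, 0, 10, 9] ! (i mod 24))"
  by (rule is_SOS_2_cyclic_list) code_simp+

lemma is_SOS_12: "is_SOS 12 2 24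
  (\<lambda>i. [0, 1, 2, 0, 3, 1, 4, 0, 5, 1, 6, 0, 7, 1, 8, 0, 9, 1, 10, 3, 2, 4, 5, 10] ! (i mod 24))"
  by (rule is_SOS_2_cyclic_list) code_simp+

section \<open>Antiperiodic sequences\<close>

definition antiperiodic_ext :: "int \<Rightarrow> nat \<Rightarrow> (nat \<Rightarrow> int) \<Rightarrow> nat \<Rightarrow> int" where
  "antiperiodic_ext q M w i = neg_if q (odd (i div M)) (w (i mod M))"

lemma antiperiodic_ext_add_period [simp]:
  "0 < M \<Longrightarrow> antiperiodic_ext q M w (i + 2 * M) = antiperiodic_ext q M w i"
  by (simp add: antiperiodic_ext_def)

lemma antiperiodic_ext_Suc:
  assumes "0 < M" "w M = (- w 0) mod q" "w 0 \<in> {0..<q}"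
  shows "antiperiodic_ext q M w (Suc i) = neg_if q (odd (i div M)) (w (Suc (i mod M)))"
proof (cases "Suc (i mod M) < M")
  case True
  then have "Suc i div M = i div M" "Suc i mod M = Suc (i mod M)"
    by (simp_all add: div_Suc mod_Suc)
  then show ?thesis by (simp add: antiperiodic_ext_def)
next
  case False
  then have wrap: "Suc (i mod M) = M" using assms(1) by (metis Suc_lessI mod_less_divisor)
  then have "Suc i div M = Suc (i div M)" "Suc i mod M = 0"
    by (simp_all add: div_Suc mod_Suc)
  then show ?thesis
    using neg_if_not[OF assms(3), of "odd (i div M)"] by (simp add: antiperiodic_ext_def wrap assms(2) neg_if_def)
qed

lemma antiperiodic_ext_pair_eq:
  fixes q :: int and M :: nat and w :: "nat \<Rightarrow> int"
  defines "s \<equiv> antiperiodic_ext q M w"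
  assumes "0 < M" and range: "\<And>t. t < M \<Longrightarrow> w t \<in> {0..<q}"
    and wrap: "w M = (- w 0) mod q"
    and class_pairs_inj: "inj_on (\<lambda>t. (mod_abs q (w t), mod_abs q (w (Suc t)))) {..<M}"
    and eq: "s i = s j" "s (Suc i) = s (Suc j)"
  shows "i mod (2 * M) = j mod (2 * M) \<or> (- s i) mod q = s i \<and> (- s (Suc i)) mod q = s (Suc i)"
proof -
  have q: "0 < q" using range[OF \<open>0 < M\<close>] by simp
  have w_range: "w t \<in> {0..<q}" if "t \<le> M" for t
    using range[of t] range[OF \<open>0 < M\<close>] that q by (cases "t = M") (simp_all add: wrap)
  have s_eq: "s i = neg_if q (odd (i div M)) (w (i mod M))" for i
    by (simp add: s_def antiperiodic_ext_def)
  have s_Suc: "s (Suc i) = neg_if q (odd (i div M)) (w (Suc (i mod M)))" for i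
    unfolding s_def using antiperiodic_ext_Suc[OF \<open>0 < M\<close> wrap] range[OF \<open>0 < M\<close>] by simp
  have "mod_abs q (w (i mod M)) = mod_abs q (w (j mod M))"
    "mod_abs q (w (Suc (i mod M))) = mod_abs q (w (Suc (j mod M)))"
    using arg_cong[OF eq(1), of "mod_abs q"] arg_cong[OF eq(2), of "mod_abs q"]
    unfolding s_Suc unfolding s_eq by simp_all
  then have same_mod: "i mod M = j mod M"
    using inj_onD[OF class_pairs_inj] \<open>0 < M\<close> by simp
  show ?thesis
  proof (cases "odd (i div M) \<longleftrightarrow> odd (j div M)")
    case True
    then have "i div M mod 2 = j div M mod 2" by (simp add: mod2_eq_if)
    with same_mod show ?thesis by (simp add: mod_mult2_eq mult.commute[of 2])
  next
    case False
    then have flip: "neg_if q (odd (j div M)) x = (- neg_if q (odd (i div M)) x) mod q"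
      if "x \<in> {0..<q}" for x
      using neg_if_not[OF that, of "odd (i div M)"] False by (cases "odd (i div M)") simp_all
    have "j mod M < M" using \<open>0 < M\<close> by simp
    then have "s j = (- s i) mod q" "s (Suc j) = (- s (Suc i)) mod q"
      unfolding s_Suc unfolding s_eq same_mod using flip w_range by simp_all
    with eq show ?thesis by simp
  qed
qed

lemma is_SOS_2_antiperiodic_ext:
  fixes w :: "nat \<Rightarrow> int" and P :: "int \<Rightarrow> int \<Rightarrow> bool"
  assumes "0 < M"
    and range: "\<And>t. t < M \<Longrightarrow> w t \<in> {0..<q}"
    and small: "\<And>t. t < M \<Longrightarrow> 2 * mod_abs q (w t) < q"
    and wrap: "w M = (- w 0) mod q"
    and class_pairs_inj: "inj_on (\<lambda>t. (mod_abs q (w t), mod_abs q (w (Suc t)))) {..<M}"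
    and steps: "\<And>t. t < M \<Longrightarrow> P (w t) (w (Suc t))"
    and asym: "\<And>x y. P x y \<Longrightarrow> \<not> P y x"
    and neg: "\<And>x y. P x y \<Longrightarrow> P ((- x) mod q) ((- y) mod q)"
  shows "is_SOS q 2 (2 * M) (antiperiodic_ext q M w)"
proof -
  let ?s = "antiperiodic_ext q M w"
  have q: "0 < q" using range[OF \<open>0 < M\<close>] by simp
  have s_range: "?s i \<in> {0..<q}" for i
    unfolding antiperiodic_ext_def using neg_if_range[OF q range] \<open>0 < M\<close> by simp
  have s_small: "2 * mod_abs q (?s i) < q" for i
    unfolding antiperiodic_ext_def using small \<open>0 < M\<close> by simp
  have s_steps: "P (?s i) (?s (Suc i))" for i
  proof -
    have "P (w (i mod M)) (w (Suc (i mod M)))" using steps \<open>0 < M\<close> by simp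
    then show ?thesis
      unfolding antiperiodic_ext_Suc[OF \<open>0 < M\<close> wrap range[OF \<open>0 < M\<close>]]
      unfolding antiperiodic_ext_def neg_if_def by (auto intro: neg)
  qed
  have s_pairs_inj: "i mod (2 * M) = j mod (2 * M)" if "?s i = ?s j" "?s (Suc i) = ?s (Suc j)" for i j
  proof (rule ccontr)
    assume "i mod (2 * M) \<noteq> j mod (2 * M)"
    then have "(- ?s i) mod q = ?s i" "(- ?s (Suc i)) mod q = ?s (Suc i)"
      using antiperiodic_ext_pair_eq[OF \<open>0 < M\<close> range wrap class_pairs_inj that] by simp_all
    then have "?s i = 0" "?s (Suc i) = 0"
      using self_negating_eq_0 s_range s_small by metis+
    then show False using s_steps[of i] asym by metis
  qed
  show ?thesis
  proof (rule is_SOS_2_if_oriented[where P = "\<lambda>x y. P x y \<and> x \<in> {0..<q} \<and> y \<in> {0..<q}"])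
    show "\<not> (P ((- y) mod q) ((- x) mod q) \<and> (- y) mod q \<in> {0..<q} \<and> (- x) mod q \<in> {0..<q})"
      if "P x y \<and> x \<in> {0..<q} \<and> y \<in> {0..<q}" for x y
      using that neg[of "(- y) mod q" "(- x) mod q"] asym[of x y] by (auto simp: mod_minus_eq)
    show "\<not> (P y x \<and> y \<in> {0..<q} \<and> x \<in> {0..<q})"
      if "P x y \<and> x \<in> {0..<q} \<and> y \<in> {0..<q}" for x y
      using that asym by blast
    show "P (?s i) (?s (Suc i)) \<and> ?s i \<in> {0..<q} \<and> ?s (Suc i) \<in> {0..<q}" for i
      using s_steps s_range by blast
    show "i mod (2 * M) = j mod (2 * M)" if "?s i = ?s j" "?s (Suc i) = ?s (Suc j)" for i j
      using that by (rule s_pairs_inj)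
  qed (use \<open>0 < M\<close> s_range in simp_all)
qed

section \<open>An Eulerian circuit of the circulant tournament\<close>

definition circ_arc :: "nat \<Rightarrow> int \<Rightarrow> int \<Rightarrow> bool" where
  "circ_arc D a b \<longleftrightarrow> (b - a) mod (2 * int D + 1) \<in> {1..int D}"

lemma circ_arc_shift [simp]: "circ_arc D (a + c) (b + c) \<longleftrightarrow> circ_arc D a b"
  by (simp add: circ_arc_def)

lemma circ_arc_asym:
  assumes "circ_arc D a b"
  shows "\<not> circ_arc D b a"
proof
  let ?n = "2 * int D + 1"
  assume "circ_arc D b a"
  have "((b - a) mod ?n + (a - b) mod ?n) mod ?n = 0"
    by (simp add: mod_add_eq)
  moreover have "0 < (b - a) mod ?n + (a - b) mod ?n" "(b - a) mod ?n + (a - b) mod ?n < ?n"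
    using assms \<open>circ_arc D b a\<close> by (auto simp: circ_arc_def)
  ultimately show False by simp
qed

lemma not_circ_arc_pred: "0 < D \<Longrightarrow> \<not> circ_arc D (a + 1) a"
  by (simp add: circ_arc_def zmod_zminus1_eq_if)

definition circ_tour :: "nat \<Rightarrow> nat \<Rightarrow> int" where
  "circ_tour D t = (\<Sum>k<t. int (k mod D) + 1) mod (2 * int D + 1)"

lemma circ_tour_0 [simp]: "circ_tour D 0 = 0"
  by (simp add: circ_tour_def)

lemma circ_tour_bounds: "0 \<le> circ_tour D t" "circ_tour D t \<le> 2 * int D"
  unfolding circ_tour_def using pos_mod_bound[of "2 * int D + 1" "\<Sum>k<t. int (k mod D) + 1"]
  by simp_all

lemma circ_tour_step:
  assumes "0 < D"
  shows "(circ_tour D (Suc t) - circ_tour D t) mod (2 * int D + 1) = int (t mod D) + 1"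
proof -
  have "int (t mod D) < int D" using assms by simp
  then show ?thesis
    by (simp add: circ_tour_def mod_diff_left_eq mod_diff_right_eq)
qed

lemma circ_arc_circ_tour:
  assumes "0 < D"
  shows "circ_arc D (circ_tour D t) (circ_tour D (Suc t))"
  using circ_tour_step[OF assms, of t] mod_less_divisor[OF assms, of t] by (simp add: circ_arc_def)

lemma sum_mod_steps:
  assumes "0 < D"
  shows "(\<Sum>k<t. int (k mod D) + 1) = int (t div D) * (\<Sum>k<D. int k + 1) + (\<Sum>k<t mod D. int k + 1)"
proof (induction t)
  case (Suc t)
  show ?case
  proof (cases "Suc (t mod D) < D")
    case True
    then have "Suc t div D = t div D" "Suc t mod D = Suc (t mod D)"
      by (simp_all add: div_Suc mod_Suc)
    with Suc.IH show ?thesis by simp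
  next
    case False
    then have wrap: "Suc (t mod D) = D" using assms by (metis Suc_lessI mod_less_divisor)
    then have "Suc t div D = Suc (t div D)" "Suc t mod D = 0"
      by (simp_all add: div_Suc mod_Suc)
    moreover have "(\<Sum>k<Suc (t mod D). int k + 1) = (\<Sum>k<t mod D. int k + 1) + int (t mod D) + 1"
      by simp
    ultimately show ?thesis using Suc.IH by (simp add: wrap algebra_simps)
  qed
qed simp

lemma double_sum_Suc: "2 * (\<Sum>k<D. int k + 1) = int D * (int D + 1)"
  by (induction D) (simp_all add: algebra_simps)

lemma circ_tour_closed: "circ_tour D ((2 * D + 1) * D) = 0"
proof (cases "D = 0")
  case False
  then show ?thesis
    by (simp add: circ_tour_def sum_mod_steps add.commute[of 1])
qed (simp add: circ_tour_def)

text \<open>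
  Equal arcs have equal lengths \<open>t mod D + 1\<close>, so \<open>t \<equiv> t' (mod D)\<close>; the positions then differ
  by whole blocks of \<open>D\<close> steps, each advancing by \<open>D(D + 1)/2\<close>, a unit modulo \<open>2D + 1\<close>.
\<close>
lemma circ_tour_arc_inj:
  assumes "0 < D"
    and eq: "circ_tour D t = circ_tour D t'" "circ_tour D (Suc t) = circ_tour D (Suc t')"
  shows "t mod ((2 * D + 1) * D) = t' mod ((2 * D + 1) * D)"
proof -
  let ?n = "2 * int D + 1" and ?T = "\<Sum>k<D. int k + 1"
  have "int (t mod D) + 1 = int (t' mod D) + 1"
    using circ_tour_step[OF assms(1), of t] circ_tour_step[OF assms(1), of t'] eq by simp
  then have same_mod: "t mod D = t' mod D" by simp
  have "(int (t div D) * ?T + (\<Sum>k<t mod D. int k + 1)) mod ?n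
      = (int (t' div D) * ?T + (\<Sum>k<t mod D. int k + 1)) mod ?n"
    using eq(1) by (simp add: circ_tour_def sum_mod_steps[OF assms(1)] same_mod)
  then have "?n dvd (int (t div D) - int (t' div D)) * ?T"
    by (simp add: mod_eq_dvd_iff left_diff_distrib)
  moreover have "coprime ?n ?T"
  proof (rule coprimeI)
    fix c assume "c dvd ?n" "c dvd ?T"
    then have "c dvd ?n * ?n - 4 * (2 * ?T)" by simp
    also have "?n * ?n - 4 * (2 * ?T) = 1" by (simp only: double_sum_Suc) (simp add: algebra_simps)
    finally show "is_unit c" .
  qed
  ultimately have "?n dvd int (t div D) - int (t' div D)"
    using coprime_dvd_mult_left_iff by blast
  then have "?n * int D dvd (int (t div D) - int (t' div D)) * int D"
    by simp
  also have "(int (t div D) - int (t' div D)) * int D = int t - int t'"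
  proof -
    have "int t = int (t div D) * int D + int (t mod D)" "int t' = int (t' div D) * int D + int (t mod D)"
      using div_mult_mod_eq[of t D] div_mult_mod_eq[of t' D] same_mod by (metis of_nat_add of_nat_mult)+
    then show ?thesis by (simp add: algebra_simps)
  qed
  finally have "int t mod int ((2 * D + 1) * D) = int t' mod int ((2 * D + 1) * D)"
    by (simp add: mod_eq_dvd_iff algebra_simps)
  then show ?thesis by (metis of_nat_eq_iff zmod_int)
qed

lemma exists_SOS_2_4D_plus_1:
  fixes q :: int
  assumes "0 < D" "4 * int D + 1 \<le> q"
  shows "\<exists>s. is_SOS q 2 (2 * D * (2 * D + 1)) s"
proof -
  let ?M = "(2 * D + 1) * D"
  have abs_tour: "mod_abs q (circ_tour D t) = circ_tour D t" for t
    using circ_tour_bounds[of D t] assms(2) by (simp add: mod_abs_eq_self)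
  have "is_SOS q 2 (2 * ?M) (antiperiodic_ext q ?M (circ_tour D))"
  proof (rule is_SOS_2_antiperiodic_ext[where P = "\<lambda>x y. circ_arc D (mod_abs q x) (mod_abs q y)"])
    show "0 < ?M" using assms(1) by simp
    show "circ_tour D t \<in> {0..<q}" "2 * mod_abs q (circ_tour D t) < q" for t
      using circ_tour_bounds[of D t] assms(2) abs_tour by auto
    show "circ_tour D ?M = (- circ_tour D 0) mod q"
      using circ_tour_closed by simp
    show "inj_on (\<lambda>t. (mod_abs q (circ_tour D t), mod_abs q (circ_tour D (Suc t)))) {..<?M}"
    proof (rule inj_onI)
      fix t t' assume "t \<in> {..<?M}" "t' \<in> {..<?M}"
        and "(mod_abs q (circ_tour D t), mod_abs q (circ_tour D (Suc t)))
           = (mod_abs q (circ_tour D t'), mod_abs q (circ_tour D (Suc t')))"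
      then show "t = t'" using circ_tour_arc_inj[OF assms(1), of t t'] by (simp add: abs_tour)
    qed
    show "circ_arc D (mod_abs q (circ_tour D t)) (mod_abs q (circ_tour D (Suc t)))" for t
      using circ_arc_circ_tour[OF assms(1)] by (simp add: abs_tour)
  qed (use circ_arc_asym in auto)
  moreover have "2 * ?M = 2 * D * (2 * D + 1)" by simp
  ultimately show ?thesis by metis
qed

definition signed_circ_arc :: "int \<Rightarrow> nat \<Rightarrow> int \<Rightarrow> int \<Rightarrow> bool" where
  "signed_circ_arc q D x y \<longleftrightarrow>
     (mod_abs q x \<in> {1..2 * int D + 1} \<and> mod_abs q y \<in> {1..2 * int D + 1} \<and>
        (if lower_half q x = lower_half q y then circ_arc D (mod_abs q x) (mod_abs q y)
         else circ_arc D (mod_abs q y) (mod_abs q x)))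
     \<or> (mod_abs q x = 0 \<and> mod_abs q y = int D - 1)
     \<or> (mod_abs q y = 0 \<and> mod_abs q x = 1)"

lemma signed_circ_arc_asym:
  assumes "3 \<le> D" "signed_circ_arc q D x y"
  shows "\<not> signed_circ_arc q D y x"
  using assms circ_arc_asym unfolding signed_circ_arc_def by (auto split: if_splits)

lemma signed_circ_arc_neg:
  assumes "4 * int D + 3 \<le> q" "signed_circ_arc q D x y"
  shows "signed_circ_arc q D ((- x) mod q) ((- y) mod q)"
proof -
  have "lower_half q ((- z) mod q) \<longleftrightarrow> \<not> lower_half q z" if "mod_abs q z \<in> {1..2 * int D + 1}" for z
    using that assms(1) by (intro lower_half_neg) auto
  then show ?thesis
    using assms(2) unfolding signed_circ_arc_def by (auto split: if_splits)
qed

text \<open>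
  The classes visited are \<open>1, 0, D - 1, D - 2, \<dots>, 2\<close> and then the circuit shifted to
  \<open>{1, \<dots>, 2D + 1}\<close>; the signs alternate along the path and are negative on the circuit.
\<close>
definition path_tour_class :: "nat \<Rightarrow> nat \<Rightarrow> int" where
  "path_tour_class D t =
     (if t = 0 then 1 else if t = 1 then 0 else if t < D then int D - int t + 1
      else circ_tour D (t - D) + 1)"

definition path_tour_walk :: "int \<Rightarrow> nat \<Rightarrow> nat \<Rightarrow> int" where
  "path_tour_walk q D t = neg_if q (D \<le> t \<or> 2 \<le> t \<and> even (D - t)) (path_tour_class D t)"

lemma path_tour_class_bounds: "0 \<le> path_tour_class D t" "path_tour_class D t \<le> 2 * int D + 1"
  using circ_tour_bounds[of D "t - D"] by (auto simp: path_tour_class_def)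

lemma path_tour_class_eq_0_iff: "path_tour_class D t = 0 \<longleftrightarrow> t = 1"
  using circ_tour_bounds[of D "t - D"] by (auto simp: path_tour_class_def)

lemma path_tour_class_path: "2 \<le> t \<Longrightarrow> t \<le> D \<Longrightarrow> path_tour_class D t = int D - int t + 1"
  by (auto simp: path_tour_class_def)

lemma path_tour_class_tour: "D \<le> t \<Longrightarrow> 2 \<le> t \<Longrightarrow> path_tour_class D t = circ_tour D (t - D) + 1"
  by (simp add: path_tour_class_def)

lemma mod_abs_path_tour_walk:
  assumes "4 * int D + 3 \<le> q"
  shows "mod_abs q (path_tour_walk q D t) = path_tour_class D t"
  using path_tour_class_bounds[of D t] assms by (simp add: path_tour_walk_def mod_abs_eq_self)

lemma lower_half_path_tour_walk:
  assumes "4 * int D + 3 \<le> q" "t \<noteq> 1"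
  shows "lower_half q (path_tour_walk q D t) \<longleftrightarrow> \<not> (D \<le> t \<or> 2 \<le> t \<and> even (D - t))"
proof -
  have "0 < path_tour_class D t"
    using path_tour_class_bounds(1)[of D t] path_tour_class_eq_0_iff[of D t] assms(2) by linarith
  then show ?thesis
    using path_tour_class_bounds(2)[of D t] assms(1) unfolding path_tour_walk_def
    by (intro lower_half_neg_if) auto
qed

lemma signed_circ_arc_path_tour_walk:
  assumes "3 \<le> D" "4 * int D + 3 \<le> q"
  shows "signed_circ_arc q D (path_tour_walk q D t) (path_tour_walk q D (Suc t))"
proof -
  consider "t = 0" | "t = 1" | "2 \<le> t" "t < D" | "D \<le> t" by linarith
  then show ?thesis
  proof cases
    case 1
    then show ?thesis using assms
      by (simp add: signed_circ_arc_def mod_abs_path_tour_walk path_tour_class_def)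
  next
    case 2
    then show ?thesis using assms
      by (simp add: signed_circ_arc_def mod_abs_path_tour_walk path_tour_class_def)
  next
    case 3
    then have "path_tour_class D t = path_tour_class D (Suc t) + 1"
      by (simp add: path_tour_class_path)
    moreover have "lower_half q (path_tour_walk q D t) \<noteq> lower_half q (path_tour_walk q D (Suc t))"
      using 3 assms(2) by (cases "Suc t = D") (auto simp: lower_half_path_tour_walk)
    moreover have "path_tour_class D (Suc t) \<ge> 1" "path_tour_class D t \<le> 2 * int D + 1"
      using 3 path_tour_class_bounds[of D t] by (simp_all add: path_tour_class_path)
    ultimately show ?thesis
      using assms(2)
      by (simp add: signed_circ_arc_def mod_abs_path_tour_walk circ_arc_def)
  next
    case 4
    then have "circ_arc D (path_tour_class D t) (path_tour_class D (Suc t))"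
      using assms(1) circ_arc_circ_tour[of D "t - D"]
      by (simp add: path_tour_class_tour Suc_diff_le)
    moreover have "lower_half q (path_tour_walk q D t) = lower_half q (path_tour_walk q D (Suc t))"
      using 4 assms by (simp add: lower_half_path_tour_walk)
    ultimately show ?thesis
      using 4 assms circ_tour_bounds[of D "t - D"] circ_tour_bounds[of D "Suc t - D"]
      by (simp add: signed_circ_arc_def mod_abs_path_tour_walk path_tour_class_tour)
  qed
qed

lemma path_tour_class_pairs_inj:
  assumes "3 \<le> D"
  shows "inj_on (\<lambda>t. (path_tour_class D t, path_tour_class D (Suc t))) {..<D + (2 * D + 1) * D}"
proof (rule inj_onI)
  let ?c = "path_tour_class D" and ?N = "(2 * D + 1) * D"
  fix t t' assume t: "t \<in> {..<D + ?N}" and t': "t' \<in> {..<D + ?N}"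
    and eq: "(?c t, ?c (Suc t)) = (?c t', ?c (Suc t'))"
  have start: "t \<le> 1 \<longleftrightarrow> ?c t = 0 \<or> ?c (Suc t) = 0" for t
    by (auto simp: path_tour_class_eq_0_iff)
  have tour: "D \<le> t \<longleftrightarrow> circ_arc D (?c t) (?c (Suc t))" if "2 \<le> t" for t
  proof (cases "D \<le> t")
    case True
    then show ?thesis using assms that circ_arc_circ_tour[of D "t - D"]
      by (simp add: path_tour_class_tour Suc_diff_le)
  next
    case False
    then have "?c t = ?c (Suc t) + 1" using that by (simp add: path_tour_class_path)
    then show ?thesis using False assms not_circ_arc_pred[of D] by simp
  qed
  consider "t \<le> 1" | "2 \<le> t" "t < D" | "D \<le> t" by linarith
  then show "t = t'"
  proof cases
    case 1
    then have "t' \<le> 1" using start eq by auto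
    moreover have "t = 1 \<longleftrightarrow> t' = 1"
      using eq path_tour_class_eq_0_iff[of D t] path_tour_class_eq_0_iff[of D t'] by auto
    ultimately show ?thesis using 1 by linarith
  next
    case 2
    then have "2 \<le> t'" "t' < D" using start[of t] start[of t'] tour[of t] tour[of t'] eq by auto
    with 2 eq show ?thesis by (simp add: path_tour_class_path)
  next
    case 3
    then have "D \<le> t'" using assms start[of t] start[of t'] tour[of t] tour[of t'] eq by auto
    with 3 eq assms have "(t - D) mod ?N = (t' - D) mod ?N"
      by (intro circ_tour_arc_inj) (simp_all add: path_tour_class_tour Suc_diff_le)
    with 3 \<open>D \<le> t'\<close> t t' show ?thesis by simp
  qed
qed

lemma exists_SOS_2_4D_plus_3:
  fixes q :: int
  assumes "3 \<le> D" "4 * int D + 3 \<le> q"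
  shows "\<exists>s. is_SOS q 2 (4 * D * (D + 1)) s"
proof -
  let ?M = "D + (2 * D + 1) * D" and ?w = "path_tour_walk q D"
  have "is_SOS q 2 (2 * ?M) (antiperiodic_ext q ?M ?w)"
  proof (rule is_SOS_2_antiperiodic_ext[where P = "signed_circ_arc q D"])
    show "0 < ?M" using assms(1) by simp
    show "?w t \<in> {0..<q}" for t
      using neg_if_range path_tour_class_bounds[of D t] assms(2) by (simp add: path_tour_walk_def)
    show "2 * mod_abs q (?w t) < q" for t
      using path_tour_class_bounds[of D t] assms(2) by (simp add: mod_abs_path_tour_walk)
    show "?w ?M = (- ?w 0) mod q"
      using assms circ_tour_closed[of D]
      by (simp add: path_tour_walk_def path_tour_class_def neg_if_def)
    show "inj_on (\<lambda>t. (mod_abs q (?w t), mod_abs q (?w (Suc t)))) {..<?M}"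
      using path_tour_class_pairs_inj[OF assms(1)] assms(2) by (simp add: mod_abs_path_tour_walk)
    show "signed_circ_arc q D (?w t) (?w (Suc t))" for t
      using assms by (rule signed_circ_arc_path_tour_walk)
    show "\<not> signed_circ_arc q D y x" if "signed_circ_arc q D x y" for x y
      using assms(1) that by (rule signed_circ_arc_asym)
    show "signed_circ_arc q D ((- x) mod q) ((- y) mod q)" if "signed_circ_arc q D x y" for x y
      using assms(2) that by (rule signed_circ_arc_neg)
  qed
  moreover have "2 * ?M = 4 * D * (D + 1)" by (simp add: algebra_simps)
  ultimately show ?thesis by metis
qed

lemma exists_SOS_2_4D_plus_3_or_4:
  assumes "1 \<le> D" "q = 4 * D + 3 \<or> q = 4 * D + 4"
  shows "\<exists>s. is_SOS (int q) 2 (4 * D * (D + 1)) s"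
proof -
  consider "D = 1" | "D = 2" | "3 \<le> D" using assms(1) by linarith
  then show ?thesis
  proof cases
    case 1
    then show ?thesis using assms(2) is_SOS_7 is_SOS_8 by auto
  next
    case 2
    then show ?thesis using assms(2) is_SOS_11 is_SOS_12 by auto
  next
    case 3
    then show ?thesis using assms(2) exists_SOS_2_4D_plus_3[of D "int q"] by auto
  qed
qed

theorem corollary3p10:
  fixes q :: nat
  assumes "q \<ge> 5"
  shows "\<exists>s. is_SOS (int q) 2
           (if q mod 4 = 0 then q * (q - 4) div 4
            else if q mod 4 = 1 then (q + 1) * (q - 1) div 4
            else if q mod 4 = 2 then q * (q - 2) div 4
            else (q + 1) * (q - 3) div 4) s"
proof -
  define D where "D = q div 4"
  have q: "q = 4 * D + q mod 4" and "1 \<le> D" using assms by (simp_all add: D_def)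
  consider "q mod 4 = 0" | "q mod 4 = 1" | "q mod 4 = 2" | "q mod 4 = 3" by linarith
  then show ?thesis
  proof cases
    case 1
    define E where "E = D - 1"
    have "q = 4 * E + 4" "1 \<le> E" using 1 q assms by (simp_all add: E_def)
    moreover from this have "q * (q - 4) = 4 * (4 * E * (E + 1))" by (simp add: algebra_simps)
    ultimately show ?thesis using 1 exists_SOS_2_4D_plus_3_or_4[of E q] by (simp add: algebra_simps)
  next
    case 2
    with q have "q = 4 * D + 1" "(q + 1) * (q - 1) = 4 * (2 * D * (2 * D + 1))" by simp_all
    then show ?thesis using 2 \<open>1 \<le> D\<close> exists_SOS_2_4D_plus_1[of D "int q"] by simp
  next
    case 3
    with q have "q = 4 * D + 2" "q * (q - 2) = 4 * (2 * D * (2 * D + 1))" by simp_all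
    then show ?thesis using 3 \<open>1 \<le> D\<close> exists_SOS_2_4D_plus_1[of D "int q"] by simp
  next
    case 4
    with q have "q = 4 * D + 3" by simp
    moreover from this have "(q + 1) * (q - 3) = 4 * (4 * D * (D + 1))" by (simp add: algebra_simps)
    ultimately show ?thesis
      using 4 \<open>1 \<le> D\<close> exists_SOS_2_4D_plus_3_or_4[of D q] by (simp add: algebra_simps)
  qed
qed

end
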